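(* Let $\lambda$ be a nonzero real number and let $n,r$ be positive integers. Then $$H_{n,\lambda}^{(r)}=\frac{1}{n!}\sum_{k=1}^{n}(-1)^{n-k}\langle r\rangle_{k-1,\lambda}\,k\,S_{1,\lambda}(n,k).$$ In particular, for $r=1$, $$H_{n,\lambda}=\frac{1}{n!}\sum_{k=1}^{n}(-1)^{n-k}k\,\langle 1\rangle_{k-1,\lambda}S_{1,\lambda}(n,k).$$
   Context: For real $x$ and integer $k\ge0$: $(x)_{0,\lambda}=1$, $(x)_{k,\lambda}=x(x-\lambda)\cdots(x-(k-1)\lambda)$; $\langle x\rangle_{0,\lambda}=1$, $\langle x\rangle_{k,\lambda}=x(x+\lambda)\cdots(x+(k-1)\lambda)$; $(x)_0=1$, $(x)_k=x(x-1)\cdots(x-k+1)$. The degenerate Stirling numbers of the first kind $S_{1,\lambda}(n,k)$ are defined by $(x)_{n}=\sum_{k=0}^{n}S_{1,\lambda}(n,k)(x)_{k,\lambda}$ for $n\ge 0$; equivalently $\frac{1}{k!}(\log_\lambda(1+t))^k=\sum_{n\ge k}S_{1,\lambda}(n,k)\frac{t^n}{n!}$ with $\log_\lambda(1+t)=\sum_{k\ge1}\lambda^{k-1}(1)_{k,1/\lambda}t^k/k!=((1+t)^\lambda-1)/\lambda$. The degenerate harmonic numbers are $H_{0,\lambda}=0$, $H_{n,\lambda}=\sum_{k=1}^{n}\frac{1}{\lambda}\binom{\lambda}{k}(-1)^{k-1}$ for $n\ge1$; the degenerate hyperharmonic numbers are $H_{n,\lambda}^{(1)}=H_{n,\lambda}$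 and $H_{n,\lambda}^{(r)}=\sum_{k=1}^{n}H_{k,\lambda}^{(r-1)}$ for $r\ge2$. *)

theory Defs
  imports Complex_Main "HOL-Computational_Algebra.Formal_Power_Series"
begin

definition dfall :: "real \<Rightarrow> real \<Rightarrow> nat \<Rightarrow> real" where
  "dfall l x k = (\<Prod>i<k. x - real i * l)"

definition drise :: "real \<Rightarrow> real \<Rightarrow> nat \<Rightarrow> real" where
  "drise l x k = (\<Prod>i<k. x + real i * l)"

text \<open>Degenerate logarithm log_lambda(1+t) as a formal power series:
  coefficient of t^k is lambda^(k-1) (1)_{k,1/lambda} / k! for k >= 1.\<close>
definition dlog_fps :: "real \<Rightarrow> real fps" where
  "dlog_fps l = Abs_fps (\<lambda>k. if k = 0 then 0
       else l ^ (k - 1) * dfall (1 / l) 1 k / fact k)"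

definition dstirling1 :: "real \<Rightarrow> nat \<Rightarrow> nat \<Rightarrow> real" where
  "dstirling1 l n k = fact n * fps_nth (dlog_fps l ^ k / fact k) n"

definition dharm :: "real \<Rightarrow> nat \<Rightarrow> real" where
  "dharm l n = (\<Sum>k=1..n. (1 / l) * (l gchoose k) * (-1) ^ (k - 1))"

text \<open>Degenerate hyperharmonic numbers H^{(r)}_{n,lambda} for r >= 1
  (the value at r = 0 is an irrelevant filler).\<close>
fun dhyper :: "real \<Rightarrow> nat \<Rightarrow> nat \<Rightarrow> real" where
  "dhyper l 0 n = 0"
| "dhyper l (Suc 0) n = dharm l n"
| "dhyper l (Suc (Suc r)) n = (\<Sum>k=1..n. dhyper l (Suc r) k)"

end

(* Let U(t) = -log_lambda(1 - t) = (1 - (1 - t)^lambda) / lambda. Summing over n is division by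
   1 - t, so the generating function of H^(r)_(n,lambda) is U / (1 - t)^r. Since
   1 - lambda U = (1 - t)^lambda, the binomial series give
   (1 - t)^(-r) = (1 - lambda U)^(-r/lambda) = sum_j <r>_(j,lambda) U^j / j!,
   where the middle step is the composition law (1 + t)^a o ((1 + t)^b - 1) = (1 + t)^(ab),
   proved from the differential equation (1 + t) F' = a b F. Hence the generating function is
   sum_j <r>_(j,lambda) U^(j+1) / j!, and the theorem is its coefficient of t^n, because
   [t^n] U^k = (-1)^(n-k) k! S1_lambda(n,k) / n!. *)
theory Submission
  imports Defs
begin

unbundle fps_syntax

lemma fps_binomial_deriv_mult:
  "(1 + fps_X) * fps_deriv (fps_binomial c) = fps_const (c :: 'a :: field_char_0) * fps_binomial c"
proof -
  have "is_unit (1 + fps_X :: 'a fps)"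
    by (simp add: fps_is_unit_iff)
  then show ?thesis
    by (simp add: fps_binomial_deriv)
qed

lemma fps_binomial_compose:
  fixes a b :: "'a :: field_char_0"
  shows "fps_binomial a oo (fps_binomial b - 1) = fps_binomial (a * b)"
proof -
  define G where "G = fps_binomial b - 1"
  define F where "F = fps_binomial a oo G"
  have G0: "G $ 0 = 0"
    by (simp add: G_def)
  have "(1 + fps_X) * fps_deriv F = (fps_deriv (fps_binomial a) oo G) * ((1 + fps_X) * fps_deriv G)"
    using G0 by (simp add: F_def fps_compose_deriv mult_ac)
  also have "\<dots> = fps_const b * ((fps_deriv (fps_binomial a) oo G) * ((1 + fps_X) oo G))"
    using G0 by (simp add: G_def fps_binomial_deriv_mult fps_compose_add_distrib)
  also have "\<dots> = fps_const b * (((1 + fps_X) * fps_deriv (fps_binomial a)) oo G)"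
    using G0 by (simp add: fps_compose_mult_distrib mult.commute)
  also have "\<dots> = fps_const b * ((fps_const a * fps_binomial a) oo G)"
    by (simp only: fps_binomial_deriv_mult)
  also have "\<dots> = fps_const (a * b) * F"
    unfolding F_def fps_const_mult_apply_left[symmetric] by (simp add: mult_ac)
  moreover have "(1 + fps_X :: 'a fps) \<noteq> 0"
    by (rule fps_nonzeroI[of _ 0]) simp
  ultimately have "fps_deriv F = fps_const (a * b) * F / (1 + fps_X)"
    by (metis nonzero_mult_div_cancel_left)
  moreover have "F $ 0 = 1"
    by (simp add: F_def)
  ultimately have "F = fps_binomial (a * b)"
    using fps_binomial_ODE_unique' by blast
  then show ?thesis
    by (simp add: F_def G_def)
qed

lemma one_minus_fps_X_mult_partial_sums:
  fixes f :: "nat \<Rightarrow> 'a :: comm_ring_1"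
  assumes "f 0 = 0"
  shows "(1 - fps_X) * Abs_fps (\<lambda>n. \<Sum>k=1..n. f k) = Abs_fps f"
proof (rule fps_ext)
  fix n
  have "(1 - fps_X) * Abs_fps (\<lambda>n. \<Sum>k=1..n. f k) =
      Abs_fps (\<lambda>n. \<Sum>k=1..n. f k) - fps_X * Abs_fps (\<lambda>n. \<Sum>k=1..n. f k)"
    by (simp add: algebra_simps)
  then show "((1 - fps_X) * Abs_fps (\<lambda>n. \<Sum>k=1..n. f k)) $ n = Abs_fps f $ n"
    using assms by (cases n) simp_all
qed

definition neg_dlog_fps :: "real \<Rightarrow> real fps" where
  "neg_dlog_fps l = - (dlog_fps l oo - fps_X)"

lemma neg_dlog_fps_nth_0 [simp]: "neg_dlog_fps l $ 0 = 0"
  by (simp add: neg_dlog_fps_def dlog_fps_def)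

definition drise_egf :: "real \<Rightarrow> real \<Rightarrow> real fps" where
  "drise_egf l x = Abs_fps (\<lambda>j. drise l x j / fact j)"

lemma dlog_fps_eq_binomial:
  assumes "l \<noteq> 0"
  shows "dlog_fps l = fps_const (1 / l) * (fps_binomial l - 1)"
proof (rule fps_ext)
  fix k
  have "l ^ k * dfall (1 / l) 1 k = (\<Prod>i<k. l * (1 - real i * (1 / l)))"
    by (simp add: dfall_def prod.distrib)
  also have "\<dots> = (\<Prod>i<k. l - real i)"
    using assms by (intro prod.cong) (auto simp: field_simps)
  also have "\<dots> = fact k * (l gchoose k)"
    by (simp add: gbinomial_mult_fact atLeast0LessThan)
  finally have "l ^ k * dfall (1 / l) 1 k = fact k * (l gchoose k)" .
  moreover have "l ^ (k - 1) = l ^ k / l" if "k \<ge> 1"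
    using assms that by (simp add: power_diff)
  ultimately show "dlog_fps l $ k = (fps_const (1 / l) * (fps_binomial l - 1)) $ k"
    by (simp add: dlog_fps_def)
qed

lemma dharm_ogf:
  assumes "l \<noteq> 0"
  shows "(1 - fps_X) * Abs_fps (dharm l) = neg_dlog_fps l"
proof -
  have "neg_dlog_fps l $ k = 1 / l * (l gchoose k) * (-1) ^ (k - 1)" if "k \<ge> 1" for k
    using assms that by (cases k) (simp_all add: neg_dlog_fps_def dlog_fps_eq_binomial fps_compose_uminus')
  then have "dharm l = (\<lambda>n. \<Sum>k=1..n. neg_dlog_fps l $ k)"
    by (auto simp: dharm_def)
  then show ?thesis
    using one_minus_fps_X_mult_partial_sums[of "fps_nth (neg_dlog_fps l)"] by (simp add: fps_nth_inverse)
qed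

lemma dhyper_at_0 [simp]: "dhyper l r 0 = 0"
  by (cases "(l, r, 0::nat)" rule: dhyper.cases) (simp_all add: dharm_def)

lemma dhyper_ogf:
  assumes "l \<noteq> 0" and "r \<ge> 1"
  shows "(1 - fps_X) ^ r * Abs_fps (dhyper l r) = neg_dlog_fps l"
  using assms(2)
proof (induction r rule: nat_induct_at_least)
  case base
  then show ?case
    using dharm_ogf[OF assms(1)] by simp
next
  case (Suc r)
  then obtain q where "r = Suc q"
    by (cases r) auto
  then have "dhyper l (Suc r) = (\<lambda>n. \<Sum>k=1..n. dhyper l r k)"
    by auto
  then have "(1 - fps_X) * Abs_fps (dhyper l (Suc r)) = Abs_fps (dhyper l r)"
    using one_minus_fps_X_mult_partial_sums[of "dhyper l r"] by simp
  then show ?case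
    using Suc.IH by (simp only: power_Suc2 mult.assoc)
qed

lemma drise_egf_eq_binomial:
  assumes "l \<noteq> 0"
  shows "drise_egf l x = fps_binomial (- x / l) oo (fps_const (- l) * fps_X)"
proof (rule fps_ext)
  fix j
  have "(- l) ^ j * ((- x / l) gchoose j) * fact j = (\<Prod>i<j. - l * (- x / l - real i))"
    unfolding prod.distrib by (simp add: gbinomial_mult_fact' atLeast0LessThan)
  also have "\<dots> = drise l x j"
    unfolding drise_def using assms by (intro prod.cong) (auto simp: field_simps)
  finally have "drise l x j / fact j = (- l) ^ j * ((- x / l) gchoose j)"
    by (simp add: field_simps)
  then show "drise_egf l x $ j = (fps_binomial (- x / l) oo (fps_const (- l) * fps_X)) $ j"
    by (simp add: drise_egf_def)
qed

lemma const_mult_neg_dlog_fps: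
  assumes "l \<noteq> 0"
  shows "fps_const (- l) * neg_dlog_fps l = (fps_binomial l - 1) oo - fps_X"
proof -
  have "fps_const (- l) * neg_dlog_fps l =
      fps_const l * (fps_const (1 / l) * (fps_binomial l - 1) oo - fps_X)"
    by (simp add: neg_dlog_fps_def dlog_fps_eq_binomial[OF assms] flip: fps_const_neg)
  also have "\<dots> = (fps_const l * (fps_const (1 / l) * (fps_binomial l - 1))) oo - fps_X"
    by (rule fps_const_mult_apply_left)
  also have "\<dots> = (fps_binomial l - 1) oo - fps_X"
    using assms by (simp add: mult.assoc[symmetric])
  finally show ?thesis .
qed

lemma drise_egf_compose_neg_dlog_fps:
  assumes "l \<noteq> 0"
  shows "drise_egf l x oo neg_dlog_fps l = fps_binomial (- x) oo - fps_X"
proof -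
  have "drise_egf l x oo neg_dlog_fps l =
      fps_binomial (- x / l) oo (fps_const (- l) * fps_X oo neg_dlog_fps l)"
    unfolding drise_egf_eq_binomial[OF assms] by (rule fps_compose_assoc[symmetric]) simp_all
  also have "\<dots> = fps_binomial (- x / l) oo ((fps_binomial l - 1) oo - fps_X)"
    by (simp add: const_mult_neg_dlog_fps[OF assms] flip: fps_const_mult_apply_left)
  also have "\<dots> = fps_binomial (- x / l) oo (fps_binomial l - 1) oo - fps_X"
    by (rule fps_compose_assoc) simp_all
  also have "\<dots> = fps_binomial (- x) oo - fps_X"
    using assms by (simp add: fps_binomial_compose)
  finally show ?thesis .
qed

lemma dhyper_ogf_eq_compose:
  assumes "l \<noteq> 0" and "r \<ge> 1"
  shows "Abs_fps (dhyper l r) = (fps_X * drise_egf l r) oo neg_dlog_fps l"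
proof -
  have inv: "drise_egf l r oo neg_dlog_fps l = inverse ((1 - fps_X) ^ r)"
    using one_minus_fps_X_const_neg_power[of "1 :: real" r]
    by (simp add: drise_egf_compose_neg_dlog_fps[OF assms(1)])
  have "Abs_fps (dhyper l r) = inverse ((1 - fps_X) ^ r) * ((1 - fps_X) ^ r * Abs_fps (dhyper l r))"
    by (simp add: mult.assoc[symmetric] inverse_mult_eq_1)
  also have "\<dots> = inverse ((1 - fps_X) ^ r) * neg_dlog_fps l"
    by (simp only: dhyper_ogf[OF assms])
  also have "\<dots> = neg_dlog_fps l * (drise_egf l r oo neg_dlog_fps l)"
    by (simp add: inv mult.commute)
  also have "\<dots> = (fps_X * drise_egf l r) oo neg_dlog_fps l"
    by (simp add: fps_compose_mult_distrib)
  finally show ?thesis .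
qed

lemma neg_dlog_fps_power_nth:
  assumes "k \<le> n"
  shows "(neg_dlog_fps l ^ k) $ n = (-1) ^ (n - k) * fact k / fact n * dstirling1 l n k"
proof -
  have fact_fps: "(fact k :: real fps) = fps_const (fact k)"
    by (metis fps_of_nat of_nat_fact)
  have sign: "(-1 :: real) ^ k * (-1) ^ n = (-1) ^ (n - k)"
  proof -
    obtain d where "n = k + d"
      using assms le_Suc_ex by blast
    then show ?thesis
      by (simp add: power_add mult.assoc[symmetric] flip: power_mult_distrib)
  qed
  have "neg_dlog_fps l ^ k = fps_const ((-1) ^ k) * (dlog_fps l ^ k oo - fps_X)"
    by (simp add: neg_dlog_fps_def power_minus' fps_compose_power flip: fps_const_neg fps_const_power)
  then have "(neg_dlog_fps l ^ k) $ n = (-1) ^ k * (-1) ^ n * (dlog_fps l ^ k) $ n"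
    by (simp add: fps_compose_uminus')
  then show ?thesis
    by (simp add: sign dstirling1_def fact_fps)
qed

lemma dhyper_eq_sum_dstirling1:
  assumes "l \<noteq> 0" and "r \<ge> 1"
  shows "dhyper l r n = 1 / fact n *
    (\<Sum>k=1..n. (-1) ^ (n - k) * drise l (real r) (k - 1) * real k * dstirling1 l n k)"
proof -
  have "dhyper l r n = (\<Sum>i=0..n. (fps_X * drise_egf l r) $ i * (neg_dlog_fps l ^ i) $ n)"
    by (metis dhyper_ogf_eq_compose[OF assms] fps_compose_nth fps_nth_Abs_fps)
  also have "\<dots> = (\<Sum>k=1..n. drise l r (k - 1) / fact (k - 1) * (neg_dlog_fps l ^ k) $ n)"
    by (simp add: drise_egf_def sum.atLeast_Suc_atMost)
  also have "\<dots> = (\<Sum>k=1..n. 1 / fact n *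
      ((-1) ^ (n - k) * drise l (real r) (k - 1) * real k * dstirling1 l n k))"
  proof (rule sum.cong[OF refl])
    fix k
    assume "k \<in> {1..n}"
    then have "fact k = real k * fact (k - 1)" and "k \<le> n"
      by (auto simp: fact_reduce)
    then show "drise l r (k - 1) / fact (k - 1) * (neg_dlog_fps l ^ k) $ n = 1 / fact n *
        ((-1) ^ (n - k) * drise l (real r) (k - 1) * real k * dstirling1 l n k)"
      by (simp add: neg_dlog_fps_power_nth)
  qed
  finally show ?thesis
    by (simp add: sum_distrib_left)
qed

theorem theorem3:
  fixes l :: real and n r :: nat
  assumes "l \<noteq> 0" and "n \<ge> 1" and "r \<ge> 1"
  shows "dhyper l r n = 1 / fact n *
           (\<Sum>k=1..n. (-1) ^ (n - k) * drise l (real r) (k - 1) * real k * dstirling1 l n k)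
       \<and> dharm l n = 1 / fact n *
           (\<Sum>k=1..n. (-1) ^ (n - k) * real k * drise l 1 (k - 1) * dstirling1 l n k)"
proof
  show "dhyper l r n = 1 / fact n *
      (\<Sum>k=1..n. (-1) ^ (n - k) * drise l (real r) (k - 1) * real k * dstirling1 l n k)"
    using assms by (simp add: dhyper_eq_sum_dstirling1)
  have "dharm l n = dhyper l 1 n"
    by simp
  then show "dharm l n = 1 / fact n *
      (\<Sum>k=1..n. (-1) ^ (n - k) * real k * drise l 1 (k - 1) * dstirling1 l n k)"
    using dhyper_eq_sum_dstirling1[of l 1 n] assms by (simp add: ac_simps)
qed

end
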